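(* Let $m,n\geq1$. The quiver $\mathrm Q_m^n$ is the double quiver of the graph $\Gamma_m^n$: it has the same vertices, and for each edge of $\Gamma_m^n$ between $e_\lambda$ and $e_\mu$ it has exactly one arrow from $e_\lambda$ to $e_\mu$ and exactly one arrow from $e_\mu$ to $e_\lambda$, and it has no other arrows.
   Context: Fix a field $\Bbbk$. A weight of type $(m,n)$ is a word in $\vee$ ("down") and $\wedge$ ("up") with $m$ letters $\vee$ and $n$ letters $\wedge$; $\Lambda_m^n$ is the set of weights. Place the $m+n$ points on a horizontal line. A cup diagram is a collection of pairwise non-intersecting curves below the line, each a cup (lower semicircle joining two points) or a half-line (ray going down), each point on exactly one curve; a cap diagram is the mirror image. $\underline{\lambda}$: repeatedly join neighbouring $\vee\wedge$ pairs ($\vee$ left) by cups, ignoring joined points, half-lines elsewhere; $\overline\lambda$ its mirror image. An arc diagram $\underline\alpha\lambda\overline\beta$ ($\alpha,\beta,\lambda\in\Lambda_m^n$; cup diagram of $\alpha$ below, cap diagram of $\beta$ above, labels $\lambda$) requires every cup/cap to join a $\vee$ and a $\wedge$ (labels orient components: $\vee$ down, $\wedge$ up) and no two half-lines on the same side at positions $i<j$ labelled $\vee,\wedge$. A cup/cap is clockwise if its left endpoint is $\wedge$; the degree is the number of clockwise cups and caps. The degree-0 arc diagrams are exactly $e_\lambda:=\underline\lambda\lambda\overline\lambda$; gluing each cup of $\underline\lambda$ to its mirror cap of $\overline\lambda$ gives the (counterclockwise) circles of $e_\lambda$. $\mathrm Q_m^n$ is the quiver with vertices $\{e_\lambda\}_{\lambda\in\Lambda_m^n}$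 and one arrow from $e_\alpha$ to $e_\beta$ for each arc diagram $\underline\alpha\lambda\overline\beta$ of degree $1$. $\Gamma_m^n$ is the simple undirected graph with vertices $\{e_\lambda\}_{\lambda\in\Lambda_m^n}$ and an edge between $e_\lambda$ and $e_\mu$ if one of $\lambda,\mu$ is obtained from the other by exchanging the labels $\vee$ and $\wedge$ at the two endpoints of a $\vee\cdots\wedge$ pair lying on the same circle of its degree-zero diagram (i.e. the two endpoints of one cup of $\underline\lambda$, resp. $\underline\mu$). *)

theory Defs
  imports Main
begin

text \<open>Letters of a weight: Down = the symbol vee, Up = the symbol wedge.
  A weight is a word (list), positions are 0,...,m+n-1 from left to right.\<close>
datatype sym = Down | Up

definition weights :: "nat \<Rightarrow> nat \<Rightarrow> sym list set" where
  "weights m n = {w. length (filter (\<lambda>s. s = Down) w) = m \<and>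
                     length (filter (\<lambda>s. s = Up) w) = n}"

text \<open>Repeatedly joining neighbouring Down-Up pairs (Down on the left), ignoring
  already joined points, realised by the usual left-to-right scan with a stack of
  not yet joined Down positions.\<close>
fun join_scan :: "nat list \<Rightarrow> (nat \<times> sym) list \<Rightarrow> (nat \<times> nat) list" where
  "join_scan st [] = []"
| "join_scan st ((i, Down) # xs) = join_scan (i # st) xs"
| "join_scan [] ((i, Up) # xs) = join_scan [] xs"
| "join_scan (k # st) ((j, Up) # xs) = (k, j) # join_scan st xs"

text \<open>The cups of the cup diagram of a weight (equivalently the caps of its
  cap diagram, which is its mirror image); all other points carry half-lines.\<close>
definition cups :: "sym list \<Rightarrow> (nat \<times> nat) set" where
  "cups w = set (join_scan [] (zip [0..<length w] w))"

definition endpoints :: "(nat \<times> nat) set \<Rightarrow> nat set" where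
  "endpoints C = fst ` C \<union> snd ` C"

definition halflines :: "sym list \<Rightarrow> nat set" where
  "halflines w = {0..<length w} - endpoints (cups w)"

text \<open>Conditions on one side (cups of alpha below, or caps of beta above) of the
  arc diagram with labels lam.\<close>
definition side_ok :: "sym list \<Rightarrow> sym list \<Rightarrow> bool" where
  "side_ok a lam \<longleftrightarrow>
     (\<forall>(i, j) \<in> cups a. lam ! i \<noteq> lam ! j) \<and>
     \<not> (\<exists>i \<in> halflines a. \<exists>j \<in> halflines a. i < j \<and> lam ! i = Down \<and> lam ! j = Up)"

definition arc_diagram :: "sym list \<Rightarrow> sym list \<Rightarrow> sym list \<Rightarrow> bool" where
  "arc_diagram a lam b \<longleftrightarrow> side_ok a lam \<and> side_ok b lam"

definition clockwise :: "sym list \<Rightarrow> sym list \<Rightarrow> nat" where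
  "clockwise a lam = card {(i, j) \<in> cups a. lam ! i = Up}"

definition degree :: "sym list \<Rightarrow> sym list \<Rightarrow> sym list \<Rightarrow> nat" where
  "degree a lam b = clockwise a lam + clockwise b lam"

text \<open>Number of arrows of Q_m^n from e_alpha to e_beta: one per arc diagram
  underline(alpha) lam overline(beta) of degree 1 (lam ranging over weights).\<close>
definition num_arrows :: "nat \<Rightarrow> nat \<Rightarrow> sym list \<Rightarrow> sym list \<Rightarrow> nat" where
  "num_arrows m n a b =
     card {lam \<in> weights m n. arc_diagram a lam b \<and> degree a lam b = 1}"

definition swap_labels :: "nat \<Rightarrow> nat \<Rightarrow> sym list \<Rightarrow> sym list" where
  "swap_labels i j w = w[i := w ! j, j := w ! i]"

definition gamma_edge :: "sym list \<Rightarrow> sym list \<Rightarrow> bool" where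
  "gamma_edge lam mu \<longleftrightarrow>
     (\<exists>(i, j) \<in> cups lam. mu = swap_labels i j lam) \<or>
     (\<exists>(i, j) \<in> cups mu. lam = swap_labels i j mu)"

end

theory Submission
  imports Defs
begin

text \<open>
  Let \<open>a\<close> and \<open>lam\<close> be weights of the same type such that every cup of \<open>a\<close> joins a Down and
  an Up of \<open>lam\<close>. Then \<open>lam\<close> and \<open>a\<close> carry the same number of Downs on the cups of \<open>a\<close>, hence
  also on its half-lines. On these, both read Up \<dots> Up Down \<dots> Down (for \<open>lam\<close> this is the
  half-line condition), so they agree there. Thus \<open>lam\<close> is \<open>a\<close> with the labels of its
  clockwise cups swapped: clockwise degree 0 means \<open>lam = a\<close>, degree 1 means that \<open>lam\<close> arises
  from \<open>a\<close> by swapping the ends of one cup. A diagram \<open>a lam b\<close> of degree 1 therefore has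
  either \<open>lam = b\<close>, a one-cup swap of \<open>a\<close>, or \<open>lam = a\<close>, a one-cup swap of \<open>b\<close>. The two
  cases exclude each other, which gives exactly one arrow per edge of Gamma in each direction.
\<close>

lemma sym_not_Down_iff [simp]: "x \<noteq> Down \<longleftrightarrow> x = Up"
  and sym_not_Up_iff [simp]: "x \<noteq> Up \<longleftrightarrow> x = Down"
  by (cases x; simp)+

lemma join_scan_mem:
  assumes "(i, j) \<in> set (join_scan st xs)"
    and "sorted_wrt (<) (map fst xs)" and "\<forall>s \<in> set st. \<forall>x \<in> set xs. s < fst x"
  shows "i < j \<and> (j, Up) \<in> set xs \<and> (i \<in> set st \<or> (i, Down) \<in> set xs)"
  using assms
proof (induction st xs rule: join_scan.induct)
  case (2 st i xs)
  then show ?case by fastforce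
next
  case (4 k st j xs)
  then show ?case by fastforce
qed auto

lemma join_scan_distinct_fst:
  assumes "distinct st" and "sorted_wrt (<) (map fst xs)"
    and "\<forall>s \<in> set st. \<forall>x \<in> set xs. s < fst x"
  shows "distinct (map fst (join_scan st xs))"
  using assms
proof (induction st xs rule: join_scan.induct)
  case (2 st i xs)
  then show ?case by fastforce
next
  case (4 k st j xs)
  have "k \<notin> fst ` set (join_scan st xs)"
  proof
    assume "k \<in> fst ` set (join_scan st xs)"
    then obtain l where "(k, l) \<in> set (join_scan st xs)" by force
    from join_scan_mem[OF this] 4(2-4) show False by fastforce
  qed
  with 4 show ?case by auto
qed auto

lemma join_scan_distinct_snd:
  assumes "sorted_wrt (<) (map fst xs)" and "\<forall>s \<in> set st. \<forall>x \<in> set xs. s < fst x"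
  shows "distinct (map snd (join_scan st xs))"
  using assms
proof (induction st xs rule: join_scan.induct)
  case (2 st i xs)
  then show ?case by fastforce
next
  case (4 k st j xs)
  have "j \<notin> snd ` set (join_scan st xs)"
  proof
    assume "j \<in> snd ` set (join_scan st xs)"
    then obtain i where "(i, j) \<in> set (join_scan st xs)" by force
    from join_scan_mem[OF this] 4(2,3) show False by fastforce
  qed
  with 4 show ?case by auto
qed auto

lemma join_scan_complete:
  assumes "s \<in> set st \<or> ((s, Down) \<in> set xs \<and> s < q)" and "(q, Up) \<in> set xs"
    and "sorted_wrt (<) (map fst xs)"
  shows "(\<exists>j. (s, j) \<in> set (join_scan st xs)) \<or> (\<exists>i. (i, q) \<in> set (join_scan st xs))"
  using assms
proof (induction st xs rule: join_scan.induct)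
  case (3 i xs)
  then show ?case by fastforce
next
  case (4 k st j xs)
  then show ?case by (cases "s = k \<or> q = j") auto
qed auto

lemma mem_zip_upt_iff: "(i, s) \<in> set (zip [0..<length w] w) \<longleftrightarrow> i < length w \<and> w ! i = s"
  by (force simp: set_zip)

lemma mem_cupsD:
  assumes "(i, j) \<in> cups w"
  shows "i < j \<and> j < length w \<and> w ! i = Down \<and> w ! j = Up"
  using join_scan_mem[of i j "[]" "zip [0..<length w] w"] assms
  by (simp add: cups_def mem_zip_upt_iff)

lemma cups_fst_unique: "(i, j) \<in> cups w \<Longrightarrow> (i, l) \<in> cups w \<Longrightarrow> j = l"
  using join_scan_distinct_fst[of "[]" "zip [0..<length w] w"]
  unfolding cups_def distinct_map inj_on_def by force

lemma cups_snd_unique: "(i, j) \<in> cups w \<Longrightarrow> (k, j) \<in> cups w \<Longrightarrow> i = k"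
  using join_scan_distinct_snd[of "zip [0..<length w] w" "[]"]
  unfolding cups_def distinct_map inj_on_def by force

lemma cups_endpoint_unique:
  assumes "(i, j) \<in> cups w" and "(k, l) \<in> cups w" and "p \<in> {i, j}" and "p \<in> {k, l}"
  shows "(k, l) = (i, j)"
  using assms mem_cupsD[OF assms(1)] mem_cupsD[OF assms(2)] cups_fst_unique cups_snd_unique
  by (metis empty_iff insert_iff sym.distinct(1))

lemma finite_cups: "finite (cups w)"
  by (simp add: cups_def)

lemma mem_endpoints_iff: "p \<in> endpoints C \<longleftrightarrow> (\<exists>(i, j) \<in> C. p = i \<or> p = j)"
  by (force simp: endpoints_def)

lemma cups_endpoints_not_halflines: "(i, j) \<in> cups w \<Longrightarrow> i \<notin> halflines w \<and> j \<notin> halflines w"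
  by (force simp: halflines_def mem_endpoints_iff)

lemma endpoints_cups_subset: "endpoints (cups w) \<subseteq> {0..<length w}"
  unfolding endpoints_def using mem_cupsD by fastforce

text \<open>The half-line labels of a weight read Up \<dots> Up Down \<dots> Down: a Down half-line to the left
  of an Up half-line would have been joined to it by the scan.\<close>

lemma side_ok_refl: "side_ok w w"
proof -
  have "\<not> (w ! p = Down \<and> w ! q = Up)"
    if "p \<in> halflines w" "q \<in> halflines w" "p < q" for p q
  proof
    assume labels: "w ! p = Down \<and> w ! q = Up"
    have "q < length w" using that(2) by (simp add: halflines_def)
    with labels that(3) have "(\<exists>j. (p, j) \<in> cups w) \<or> (\<exists>i. (i, q) \<in> cups w)"
      using join_scan_complete[of p "[]" "zip [0..<length w] w" q]
      by (simp add: cups_def mem_zip_upt_iff)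
    with that(1,2) show False unfolding halflines_def endpoints_def by force
  qed
  then show ?thesis unfolding side_ok_def using mem_cupsD by fastforce
qed

lemma clockwise_refl: "clockwise w w = 0"
proof -
  have "{(i, j) \<in> cups w. w ! i = Up} = {}" using mem_cupsD by fastforce
  then show ?thesis unfolding clockwise_def by (metis card.empty)
qed

definition down_positions :: "sym list \<Rightarrow> nat set" where
  "down_positions w = {p. p < length w \<and> w ! p = Down}"

lemma card_down_endpoints:
  assumes "\<forall>(i, j) \<in> cups a. lam ! i \<noteq> lam ! j"
  shows "card {p \<in> endpoints (cups a). lam ! p = Down} = card (cups a)"
proof -
  define down_end where "down_end = (\<lambda>(i, j). if lam ! i = Down then i else j :: nat)"
  have "inj_on down_end (cups a)"
  proof (rule inj_onI)
    fix c d assume cd: "c \<in> cups a" "d \<in> cups a" "down_end c = down_end d"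
    obtain i j k l where ij: "c = (i, j)" and kl: "d = (k, l)" by fastforce
    have "down_end c \<in> {i, j}" "down_end c \<in> {k, l}"
      using ij kl cd(3) by (auto simp: down_end_def)
    then have "(k, l) = (i, j)"
      by (rule cups_endpoint_unique[OF cd(1)[unfolded ij] cd(2)[unfolded kl]])
    with ij kl show "c = d" by simp
  qed
  then have "card (down_end ` cups a) = card (cups a)" by (rule card_image)
  moreover have "down_end ` cups a = {p \<in> endpoints (cups a). lam ! p = Down}"
  proof (intro equalityI subsetI)
    fix p assume "p \<in> down_end ` cups a"
    then obtain i j where ij: "(i, j) \<in> cups a" "p = down_end (i, j)" by auto
    moreover have "lam ! i \<noteq> lam ! j" using assms ij(1) by blast
    ultimately show "p \<in> {p \<in> endpoints (cups a). lam ! p = Down}"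
      by (cases "lam ! i"; cases "lam ! j") (auto simp: down_end_def mem_endpoints_iff)
  next
    fix p assume "p \<in> {p \<in> endpoints (cups a). lam ! p = Down}"
    then obtain i j where ij: "(i, j) \<in> cups a" "p = i \<or> p = j" "lam ! p = Down"
      by (auto simp: mem_endpoints_iff)
    moreover have "lam ! i \<noteq> lam ! j" using assms ij(1) by blast
    ultimately have "down_end (i, j) = p" by (auto simp: down_end_def)
    with ij(1) show "p \<in> down_end ` cups a" by force
  qed
  ultimately show ?thesis by simp
qed

lemma card_down_positions_split:
  assumes "side_ok a w" and "length w = length a"
  shows "card (down_positions w) = card (cups a) + card {p \<in> halflines a. w ! p = Down}"
proof -
  have "down_positions w =
      {p \<in> endpoints (cups a). w ! p = Down} \<union> {p \<in> halflines a. w ! p = Down}"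
    using endpoints_cups_subset[of a] assms(2) by (auto simp: down_positions_def halflines_def)
  also have "card \<dots> =
      card {p \<in> endpoints (cups a). w ! p = Down} + card {p \<in> halflines a. w ! p = Down}"
    by (rule card_Un_disjoint) (auto simp: halflines_def endpoints_def cups_def)
  also have "card {p \<in> endpoints (cups a). w ! p = Down} = card (cups a)"
    using assms(1) card_down_endpoints by (simp add: side_ok_def)
  finally show ?thesis .
qed

lemma up_closed_card_eq:
  fixes A B H :: "'a::linorder set"
  assumes "finite A" and "finite B" and "A \<subseteq> H" and "B \<subseteq> H"
    and "\<forall>x \<in> A. \<forall>y \<in> H. x < y \<longrightarrow> y \<in> A" and "\<forall>x \<in> B. \<forall>y \<in> H. x < y \<longrightarrow> y \<in> B"
    and "card A = card B"
  shows "A = B"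
proof -
  have "A \<subseteq> B \<or> B \<subseteq> A"
  proof (rule ccontr)
    assume "\<not> (A \<subseteq> B \<or> B \<subseteq> A)"
    then obtain x y where "x \<in> A" "x \<notin> B" "y \<in> B" "y \<notin> A" by blast
    then show False using assms(3-6) by (cases x y rule: linorder_cases) auto
  qed
  then show ?thesis using card_subset_eq assms(1,2,7) by metis
qed

lemma finite_halflines: "finite (halflines w)"
  by (simp add: halflines_def)

lemma side_ok_halflines_eq:
  assumes "side_ok a lam" and "length lam = length a"
    and "card (down_positions lam) = card (down_positions a)" and "p \<in> halflines a"
  shows "lam ! p = a ! p"
proof -
  have up_closed: "\<forall>x \<in> {p \<in> halflines a. w ! p = Down}. \<forall>y \<in> halflines a.
      x < y \<longrightarrow> y \<in> {p \<in> halflines a. w ! p = Down}" if "side_ok a w" for w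
    using that by (auto simp: side_ok_def)
  have "card {p \<in> halflines a. lam ! p = Down} = card {p \<in> halflines a. a ! p = Down}"
    using card_down_positions_split[OF assms(1,2)] card_down_positions_split[OF side_ok_refl]
      assms(3) by simp
  then have "{p \<in> halflines a. lam ! p = Down} = {p \<in> halflines a. a ! p = Down}"
    by (intro up_closed_card_eq[OF _ _ _ _ up_closed[OF assms(1)] up_closed[OF side_ok_refl]])
      (auto simp: finite_halflines)
  then have "lam ! p = Down \<longleftrightarrow> a ! p = Down" using assms(4) by blast
  then show ?thesis by (cases "a ! p") auto
qed

lemma length_swap_labels [simp]: "length (swap_labels i j w) = length w"
  by (simp add: swap_labels_def)

lemma nth_swap_labels:
  assumes "i < length w" and "j < length w"
  shows "swap_labels i j w ! p = (if p = j then w ! i else if p = i then w ! j else w ! p)"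
  using assms by (simp add: swap_labels_def nth_list_update)

lemma side_ok_nth_neq_iff:
  assumes "side_ok a lam" and "length lam = length a"
    and "card (down_positions lam) = card (down_positions a)" and "p < length a"
  shows "lam ! p \<noteq> a ! p \<longleftrightarrow> (\<exists>(i, j) \<in> cups a. lam ! i = Up \<and> (p = i \<or> p = j))"
proof (cases "p \<in> halflines a")
  case True
  then show ?thesis
    using side_ok_halflines_eq[OF assms(1-3)] cups_endpoints_not_halflines by fastforce
next
  case False
  with assms(4) obtain i j where ij: "(i, j) \<in> cups a" "p = i \<or> p = j"
    by (auto simp: halflines_def mem_endpoints_iff)
  have "lam ! i \<noteq> lam ! j" using assms(1) ij(1) by (auto simp: side_ok_def)
  then have "lam ! p \<noteq> a ! p \<longleftrightarrow> lam ! i = Up"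
    using ij mem_cupsD[OF ij(1)] by (cases "lam ! i"; cases "lam ! j") auto
  moreover have "(k, l) = (i, j)" if "(k, l) \<in> cups a" "p = k \<or> p = l" for k l
    using cups_endpoint_unique[of i j a k l p] ij that by blast
  ultimately show ?thesis using ij by blast
qed

lemma side_ok_clockwise_0_iff:
  assumes "length lam = length a" and "card (down_positions lam) = card (down_positions a)"
  shows "side_ok a lam \<and> clockwise a lam = 0 \<longleftrightarrow> lam = a"
proof
  assume ok: "side_ok a lam \<and> clockwise a lam = 0"
  have "finite {(i, j) \<in> cups a. lam ! i = Up}"
    using finite_cups by (rule rev_finite_subset) auto
  with ok have "{(i, j) \<in> cups a. lam ! i = Up} = {}"
    by (simp add: clockwise_def)
  then have "lam ! p = a ! p" if "p < length a" for p
    using side_ok_nth_neq_iff[OF conjunct1[OF ok] assms that] by blast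
  with assms(1) show "lam = a" by (simp add: nth_equalityI)
qed (simp add: side_ok_refl clockwise_refl)

definition cup_swap :: "sym list \<Rightarrow> sym list \<Rightarrow> bool" where
  "cup_swap a lam \<longleftrightarrow> (\<exists>(i, j) \<in> cups a. lam = swap_labels i j a)"

lemma side_ok_swap_cup:
  assumes "(i, j) \<in> cups a"
  shows "side_ok a (swap_labels i j a) \<and> clockwise a (swap_labels i j a) = 1"
proof -
  let ?lam = "swap_labels i j a"
  have ij: "i < j" "j < length a" "a ! i = Down" "a ! j = Up" using mem_cupsD[OF assms] by auto
  have nth_lam: "?lam ! p = (if p = j then Down else if p = i then Up else a ! p)" for p
    using ij by (simp add: nth_swap_labels)
  have other_cup: "k \<notin> {i, j} \<and> l \<notin> {i, j}" if "(k, l) \<in> cups a" "(k, l) \<noteq> (i, j)" for k l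
    using cups_endpoint_unique[OF assms that(1)] that(2) by blast
  have "\<forall>(k, l) \<in> cups a. ?lam ! k \<noteq> ?lam ! l"
    using ij other_cup mem_cupsD by (fastforce simp: nth_lam)
  moreover have "?lam ! p = a ! p" if "p \<in> halflines a" for p
    using that cups_endpoints_not_halflines[OF assms] by (auto simp: nth_lam)
  then have "\<not> (\<exists>p \<in> halflines a. \<exists>q \<in> halflines a. p < q \<and> ?lam ! p = Down \<and> ?lam ! q = Up)"
    using side_ok_refl[of a] by (simp add: side_ok_def)
  moreover have "{(k, l) \<in> cups a. ?lam ! k = Up} = {(i, j)}"
    using assms ij other_cup mem_cupsD by (fastforce simp: nth_lam)
  ultimately show ?thesis by (simp add: side_ok_def clockwise_def)
qed

lemma side_ok_clockwise_1_iff: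
  assumes "length lam = length a" and "card (down_positions lam) = card (down_positions a)"
  shows "side_ok a lam \<and> clockwise a lam = 1 \<longleftrightarrow> cup_swap a lam"
proof
  assume ok: "side_ok a lam \<and> clockwise a lam = 1"
  then obtain i j where clockwise_cups: "{(k, l) \<in> cups a. lam ! k = Up} = {(i, j)}"
    by (auto simp: clockwise_def card_1_singleton_iff)
  then have ij: "(i, j) \<in> cups a" by blast
  have differ: "lam ! p \<noteq> a ! p \<longleftrightarrow> p = i \<or> p = j" if "p < length a" for p
    using side_ok_nth_neq_iff[OF conjunct1[OF ok] assms that] clockwise_cups by blast
  have "i < j" "j < length a" "a ! i = Down" "a ! j = Up" using mem_cupsD[OF ij] by auto
  moreover from this have "lam ! i = Up" "lam ! j = Down" using differ[of i] differ[of j] by auto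
  ultimately have "lam = swap_labels i j a"
    using assms(1) differ by (intro nth_equalityI) (auto simp: nth_swap_labels)
  with ij show "cup_swap a lam" by (auto simp: cup_swap_def)
qed (auto simp: cup_swap_def side_ok_swap_cup)

lemma gamma_edge_iff_cup_swap: "gamma_edge a b \<longleftrightarrow> cup_swap a b \<or> cup_swap b a"
  by (simp add: gamma_edge_def cup_swap_def)

lemma cup_swap_asym:
  assumes "cup_swap a b"
  shows "\<not> cup_swap b a"
proof
  assume "cup_swap b a"
  then obtain k l where kl: "(k, l) \<in> cups b" "a = swap_labels k l b"
    by (auto simp: cup_swap_def)
  obtain i j where ij: "(i, j) \<in> cups a" "b = swap_labels i j a"
    using assms by (auto simp: cup_swap_def)
  note a_cup = mem_cupsD[OF ij(1)] and b_cup = mem_cupsD[OF kl(1)]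
  have "a ! k = Up" "a ! l = Down"
    using kl(2) b_cup by (auto simp: nth_swap_labels)
  moreover have "b ! k = Down" "b ! l = Up" using b_cup by auto
  moreover have nth_b: "b ! p = (if p = j then Down else if p = i then Up else a ! p)" for p
    using ij(2) a_cup by (simp add: nth_swap_labels)
  ultimately have "k = j" "l = i"
    using nth_b[of k] nth_b[of l] by (auto split: if_splits)
  then show False using a_cup b_cup by simp
qed

lemma weights_shape:
  assumes "w \<in> weights m n"
  shows "length w = m + n \<and> card (down_positions w) = m"
proof -
  have "length w = length (filter (\<lambda>s. s = Down) w) + length (filter (\<lambda>s. s = Up) w)"
    using sum_length_filter_compl[of "\<lambda>s. s = Down" w] by simp
  moreover have "card (down_positions w) = length (filter (\<lambda>s. s = Down) w)"
    by (simp add: down_positions_def length_filter_conv_card)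
  ultimately show ?thesis using assms by (simp add: weights_def)
qed

lemma arc_diagram_degree_1_iff:
  assumes "a \<in> weights m n" and "b \<in> weights m n" and "lam \<in> weights m n"
  shows "arc_diagram a lam b \<and> degree a lam b = 1 \<longleftrightarrow>
    (lam = b \<and> cup_swap a b) \<or> (lam = a \<and> cup_swap b a)"
proof -
  have "length lam = length w \<and> card (down_positions lam) = card (down_positions w)"
    if "w \<in> weights m n" for w
    using weights_shape[OF that] weights_shape[OF assms(3)] by simp
  note shape_a = this[OF assms(1)] and shape_b = this[OF assms(2)]
  have "degree a lam b = 1 \<longleftrightarrow>
      clockwise a lam = 1 \<and> clockwise b lam = 0 \<or> clockwise a lam = 0 \<and> clockwise b lam = 1"
    by (auto simp: degree_def)
  then show ?thesis
    using side_ok_clockwise_0_iff[OF shape_a[THEN conjunct1] shape_a[THEN conjunct2]]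
      side_ok_clockwise_1_iff[OF shape_a[THEN conjunct1] shape_a[THEN conjunct2]]
      side_ok_clockwise_0_iff[OF shape_b[THEN conjunct1] shape_b[THEN conjunct2]]
      side_ok_clockwise_1_iff[OF shape_b[THEN conjunct1] shape_b[THEN conjunct2]]
    by (auto simp: arc_diagram_def)
qed

theorem lemma2p5:
  fixes m n :: nat
  assumes "m \<ge> 1" and "n \<ge> 1"
  shows "\<forall>a \<in> weights m n. \<forall>b \<in> weights m n.
           num_arrows m n a b = (if gamma_edge a b then 1 else 0)"
proof (intro ballI)
  fix a b assume a: "a \<in> weights m n" and b: "b \<in> weights m n"
  have "{lam \<in> weights m n. arc_diagram a lam b \<and> degree a lam b = 1} =
      (if cup_swap a b then {b} else if cup_swap b a then {a} else {})"
    using arc_diagram_degree_1_iff[OF a b] cup_swap_asym a b by auto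
  then show "num_arrows m n a b = (if gamma_edge a b then 1 else 0)"
    by (simp add: num_arrows_def gamma_edge_iff_cup_swap)
qed

end
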